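(* Let $F : L_n \to \Delta K$ be a non-degenerate $2$-filtration, fix a dimension $q$, and fix grades $d,h\in L_n$ with $(1,1)\le d$ and $d\le h-(1,1)$. Set $a=d-(1,1)$, $b=d-(1,0)$, $c=d-(0,1)$, $e=h-(1,1)$, $f=h-(1,0)$, $g=h-(0,1)$. If $adeh=1$, then \[\mathsf{Dgm}_q F[d,h]=B\cdot D,\qquad B=1-abeh-aceh,\quad D=1-adef-adeg.\]
   Context: $K$ is a finite simplicial complex, coefficients in a field. $P_n=\{0<\dots<n\}$, $L_n=P_n\times P_n$ with product order, $\bot=(0,0)$, $\top=(n,n)$. $\mathsf{Int}\,L_n=\{[x,y]:x\le y\}$ with $[x,y]\le[z,w]$ iff $x\le z$, $y\le w$. A $2$-filtration is a monotone map $F$ from $L_n$ to subcomplexes of $K$ (ordered by inclusion) with $F(\bot)=\emptyset$, $F(\top)=K$. Birth–death function: $ZB_qF[x,y]=\dim(Z_qF(x)\cap B_qF(y))$ for $y\ne\top$ and $\dim Z_qF(x)$ for $y=\top$, where $Z_q,B_q$ denote $q$-cycles and $q$-boundaries. $\mathsf{Dgm}_qF$ is the unique function on $\mathsf{Int}\,L_n$ with $ZB_qF[z,w]=\sum_{[x,y]\le[z,w]}\mathsf{Dgm}_qF[x,y]$. For a simplex $\sigma$, the minimal elements of the upset $\{x:\sigma\in F(x)\}$ are its lower corners; $F$ is non-degenerate if any two distinct lower corners differ in both coordinates. Notation: for $x\le y$, $xy:=ZB_qF[x,y]$; for $w\le x\le y\le z$, $wxyz:=xz-xy-wz+wy$ (the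 1-parameter Möbius inversion value of the interval $[x,z]$ in the filtration $F(w)\subseteq F(x)\subseteq F(y)\subseteq F(z)$). *)

theory Defs
  imports Complex_Main "HOL-Library.Function_Algebras"
begin

definition simplicial_complex :: "'v set set \<Rightarrow> bool" where
  "simplicial_complex K \<longleftrightarrow>
     (\<forall>\<sigma>\<in>K. finite \<sigma> \<and> \<sigma> \<noteq> {}) \<and>
     (\<forall>\<sigma>\<in>K. \<forall>\<tau>. \<tau> \<subseteq> \<sigma> \<and> \<tau> \<noteq> {} \<longrightarrow> \<tau> \<in> K)"

definition subcomplex :: "'v set set \<Rightarrow> 'v set set \<Rightarrow> bool" where
  "subcomplex L K \<longleftrightarrow> simplicial_complex L \<and> L \<subseteq> K"

text \<open>q-chains of a complex L with coefficients in a field 'k: finitely supported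
 functions on the q-simplices of L (simplices oriented by the vertex order).\<close>

definition chains :: "nat \<Rightarrow> 'v set set \<Rightarrow> ('v set \<Rightarrow> 'k::field) set" where
  "chains q L = {c. \<forall>\<sigma>. c \<sigma> \<noteq> 0 \<longrightarrow> \<sigma> \<in> L \<and> card \<sigma> = q + 1}"

definition bdry :: "'v set set \<Rightarrow> ('v::linorder set \<Rightarrow> 'k::field) \<Rightarrow> ('v set \<Rightarrow> 'k)" where
  "bdry K c = (\<lambda>\<tau>. if \<tau> = {} \<or> infinite \<tau> then 0
      else (\<Sum>v\<in>(\<Union>K) - \<tau>. (-1) ^ card {u\<in>\<tau>. u < v} * c (insert v \<tau>)))"

definition cycles :: "'v set set \<Rightarrow> nat \<Rightarrow> 'v set set \<Rightarrow> ('v::linorder set \<Rightarrow> 'k::field) set" where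
  "cycles K q L = {c \<in> chains q L. bdry K c = 0}"

definition boundaries :: "'v set set \<Rightarrow> nat \<Rightarrow> 'v set set \<Rightarrow> ('v::linorder set \<Rightarrow> 'k::field) set" where
  "boundaries K q L = bdry K ` chains (q + 1) L"

definition chain_scale :: "'k::field \<Rightarrow> ('v set \<Rightarrow> 'k) \<Rightarrow> ('v set \<Rightarrow> 'k)" where
  "chain_scale a c = (\<lambda>\<sigma>. a * c \<sigma>)"

definition vdim :: "('v set \<Rightarrow> 'k::field) set \<Rightarrow> nat" where
  "vdim S = vector_space.dim chain_scale S"

definition grid :: "nat \<Rightarrow> (nat \<times> nat) set" where
  "grid n = {x. fst x \<le> n \<and> snd x \<le> n}"

definition pleq :: "nat \<times> nat \<Rightarrow> nat \<times> nat \<Rightarrow> bool" where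
  "pleq x y \<longleftrightarrow> fst x \<le> fst y \<and> snd x \<le> snd y"

definition two_filtration :: "'v set set \<Rightarrow> nat \<Rightarrow> (nat \<times> nat \<Rightarrow> 'v set set) \<Rightarrow> bool" where
  "two_filtration K n F \<longleftrightarrow>
     (\<forall>x\<in>grid n. subcomplex (F x) K) \<and>
     (\<forall>x\<in>grid n. \<forall>y\<in>grid n. pleq x y \<longrightarrow> F x \<subseteq> F y) \<and>
     F (0, 0) = {} \<and> F (n, n) = K"

definition lower_corners :: "nat \<Rightarrow> (nat \<times> nat \<Rightarrow> 'v set set) \<Rightarrow> 'v set \<Rightarrow> (nat \<times> nat) set" where
  "lower_corners n F \<sigma> = {x \<in> grid n. \<sigma> \<in> F x \<and>
       (\<forall>y\<in>grid n. \<sigma> \<in> F y \<and> pleq y x \<longrightarrow> y = x)}"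

definition non_degenerate :: "nat \<Rightarrow> (nat \<times> nat \<Rightarrow> 'v set set) \<Rightarrow> bool" where
  "non_degenerate n F \<longleftrightarrow>
     (\<forall>\<sigma>. \<forall>x\<in>lower_corners n F \<sigma>. \<forall>y\<in>lower_corners n F \<sigma>.
        x \<noteq> y \<longrightarrow> fst x \<noteq> fst y \<and> snd x \<noteq> snd y)"

definition ZB :: "'v set set \<Rightarrow> nat \<Rightarrow> (nat \<times> nat \<Rightarrow> 'v::linorder set set) \<Rightarrow> 'k::field itself
                  \<Rightarrow> nat \<Rightarrow> nat \<times> nat \<Rightarrow> nat \<times> nat \<Rightarrow> int" where
  "ZB K n F TYPE('k) q x y =
     (if y = (n, n) then int (vdim (cycles K q (F x) :: ('v set \<Rightarrow> 'k) set))
      else int (vdim (cycles K q (F x) \<inter> boundaries K q (F y) :: ('v set \<Rightarrow> 'k) set)))"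

definition intervals :: "nat \<Rightarrow> ((nat \<times> nat) \<times> (nat \<times> nat)) set" where
  "intervals n = {(x, y). x \<in> grid n \<and> y \<in> grid n \<and> pleq x y}"

definition Dgm :: "'v set set \<Rightarrow> nat \<Rightarrow> (nat \<times> nat \<Rightarrow> 'v::linorder set set) \<Rightarrow> 'k::field itself
                  \<Rightarrow> nat \<Rightarrow> nat \<times> nat \<Rightarrow> nat \<times> nat \<Rightarrow> int" where
  "Dgm K n F TYPE('k) q = (THE m.
      (\<forall>x y. (x, y) \<notin> intervals n \<longrightarrow> m x y = 0) \<and>
      (\<forall>(z, w)\<in>intervals n.
         ZB K n F TYPE('k) q z w =
           (\<Sum>(x, y)\<in>{(x, y)\<in>intervals n. pleq x z \<and> pleq y w}. m x y)))"

end

theory Submission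
  imports Defs
begin

text \<open>\<open>Dgm\<^sub>q F[d, h]\<close> is the double box difference of \<open>ZB\<^sub>q F\<close> over the sixteen grades
  \<open>{a, b, c, d} \<times> {e, f, g, h}\<close>. It does not change when \<open>ZB x y\<close> is replaced by the multiplicity
  \<open>M x y = axey\<close>, which vanishes for \<open>x = a\<close> and for \<open>y = e\<close>. Writing \<open>Z\<^sub>x\<close> for the \<open>q\<close>-cycles of
  \<open>F x\<close> and \<open>B\<^sub>y\<close> for the \<open>q\<close>-boundaries of \<open>F y\<close>, Grassmann's formula identifies \<open>M x y\<close> with the
  dimension of \<open>(Z\<^sub>x \<inter> B\<^sub>y) / (Z\<^sub>x \<inter> B\<^sub>e + Z\<^sub>a \<inter> B\<^sub>y)\<close>, and the modular law embeds all these quotients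
  into the one for \<open>(d, h)\<close>, which is a line because \<open>adeh = 1\<close>. Hence each \<open>M x y\<close> is \<open>0\<close> or \<open>1\<close>,
  and \<open>M x y = M x h * M d y\<close> because nonzero classes coming from \<open>Z\<^sub>x\<close> and from \<open>B\<^sub>y\<close> are
  proportional in that line. Expanding the double box difference then gives the product formula.\<close>

section \<open>Finite-dimensional subspaces of a vector space\<close>

context vector_space
begin

lemma dim_mono_finite_span:
  assumes "U \<subseteq> span V" "V \<subseteq> span W" "finite W"
  shows "dim U \<le> dim V"
proof -
  obtain C where C: "C \<subseteq> V" "independent C" "V \<subseteq> span C" "card C = dim V"
    by (rule basis_exists)
  have "finite C"
    using independent_span_bound[OF assms(3) C(2)] C(1) assms(2) by auto
  have "span V \<subseteq> span C"
    using span_mono[OF C(3)] by (simp only: span_span)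
  with assms(1) have "U \<subseteq> span C"
    by (rule order_trans)
  then have "dim U \<le> card C"
    using dim_le_card \<open>finite C\<close> by blast
  with C(4) show ?thesis
    by simp
qed

lemma dim_subset_finite_span:
  assumes "U \<subseteq> V" "V \<subseteq> span W" "finite W"
  shows "dim U \<le> dim V"
proof (rule dim_mono_finite_span[OF _ assms(2,3)])
  show "U \<subseteq> span V"
    using assms(1) span_superset[of V] by (rule order_trans)
qed

lemma dim_insert_finite_span:
  assumes "U \<subseteq> span W" "finite W" "u \<notin> span U"
  shows "dim (insert u U) = Suc (dim U)"
proof -
  obtain B where B: "B \<subseteq> U" "independent B" "U \<subseteq> span B" "card B = dim U"
    by (rule basis_exists)
  have "finite B"
    using independent_span_bound[OF assms(2) B(2)] B(1) assms(1) by auto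
  have "u \<notin> span B"
    using assms(3) span_mono[OF B(1)] by blast
  then have "u \<notin> B"
    using span_base by blast
  have indep: "independent (insert u B)"
    by (rule independent_insertI[OF \<open>u \<notin> span B\<close> B(2)])
  have "U \<subseteq> span (insert u B)"
    using B(3) span_mono[OF subset_insertI] by (rule order_trans)
  then have "insert u U \<subseteq> span (insert u B)"
    using span_base[OF insertI1] by blast
  then have "card (insert u B) = dim (insert u U)"
    by (rule basis_card_eq_dim[OF insert_mono[OF B(1)] _ indep])
  with \<open>u \<notin> B\<close> \<open>finite B\<close> B(4) show ?thesis
    by simp
qed

lemma subset_span_insert_if_dim_eq_Suc:
  assumes "N \<subseteq> U" "U \<subseteq> span W" "finite W" "dim U = Suc (dim N)"
    and "z \<in> U" "z \<notin> span N"
  shows "U \<subseteq> span (insert z N)"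
proof
  fix u assume "u \<in> U"
  show "u \<in> span (insert z N)"
  proof (rule ccontr)
    assume u: "u \<notin> span (insert z N)"
    have NW: "N \<subseteq> span W"
      using assms(1,2) by (rule order_trans)
    have zNW: "insert z N \<subseteq> span W"
      using NW assms(2,5) by blast
    have "dim (insert u (insert z N)) = Suc (Suc (dim N))"
      using dim_insert_finite_span[OF zNW assms(3) u] dim_insert_finite_span[OF NW assms(3,6)]
      by simp
    moreover have "insert u (insert z N) \<subseteq> U"
      using \<open>u \<in> U\<close> assms(1,5) by blast
    then have "dim (insert u (insert z N)) \<le> dim U"
      by (rule dim_subset_finite_span[OF _ assms(2,3)])
    ultimately show False
      using assms(4) by simp
  qed
qed

lemma dim_Un_eq_add_card:
  assumes "A \<union> C \<subseteq> span W" "finite W" "finite C"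
    and "\<And>c. c \<in> C \<Longrightarrow> c \<notin> span (A \<union> (C - {c}))"
  shows "dim (A \<union> C) = dim A + card C"
  using assms(3,1,4)
proof (induction C rule: finite_induct)
  case empty
  then show ?case by simp
next
  case (insert c C)
  have "c' \<notin> span (A \<union> (C - {c'}))" if "c' \<in> C" for c'
  proof -
    have "span (A \<union> (C - {c'})) \<subseteq> span (A \<union> (insert c C - {c'}))"
      by (rule span_mono) blast
    then show ?thesis
      using insert.prems(2)[of c'] that by blast
  qed
  then have "dim (A \<union> C) = dim A + card C"
    using insert.IH insert.prems(1) by blast
  moreover have "c \<notin> span (A \<union> C)"
    using insert.prems(2)[of c] insert.hyps(2) by simp
  then have "dim (insert c (A \<union> C)) = Suc (dim (A \<union> C))"
    using insert.prems(1) by (intro dim_insert_finite_span[OF _ assms(2)]) simp_all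
  ultimately show ?case
    using insert.hyps by simp
qed

text \<open>Grassmann's formula: a basis \<open>I\<close> of \<open>A \<inter> B\<close>, extended to a basis \<open>J\<close> of \<open>B\<close>,
  contributes \<open>J - I\<close> independently modulo \<open>A\<close>.\<close>

lemma dim_Un_Int_finite_span:
  assumes A: "subspace A" and B: "subspace B"
    and "A \<subseteq> span W" "B \<subseteq> span W" "finite W"
  shows "dim (A \<union> B) + dim (A \<inter> B) = dim A + dim B"
proof -
  obtain I where I: "I \<subseteq> A \<inter> B" "independent I" "A \<inter> B \<subseteq> span I" "card I = dim (A \<inter> B)"
    by (rule basis_exists)
  obtain J where J: "I \<subseteq> J" "J \<subseteq> B" "independent J" "B \<subseteq> span J"
    using maximal_independent_subset_extend[of I B] I(1,2) by blast
  have "finite J"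
    using independent_span_bound[OF assms(5) J(3)] J(2) assms(4) by auto
  have indep_mod_A: "c \<notin> span (A \<union> (J - I - {c}))" if c: "c \<in> J - I" for c
  proof
    assume "c \<in> span (A \<union> (J - I - {c}))"
    then obtain u s where us: "c = u + s" "u \<in> span A" "s \<in> span (J - I - {c})"
      unfolding span_Un by blast
    have "J - I - {c} \<subseteq> B"
      using J(2) by blast
    then have "s \<in> B"
      using span_minimal[OF _ B] us(3) by blast
    then have "c - s \<in> B"
      using subspace_diff[OF B] c J(2) by blast
    moreover have "u = c - s"
      using us(1) by simp
    moreover have "u \<in> A"
      using us(2) span_minimal[OF order_refl A] by blast
    ultimately have "u \<in> A \<inter> B"
      by simp
    then have "u \<in> span (I \<union> (J - I - {c}))"
      using I(3) span_mono[OF Un_upper1] by blast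
    moreover have "s \<in> span (I \<union> (J - I - {c}))"
      using us(3) span_mono[OF Un_upper2] by blast
    ultimately have "c \<in> span (I \<union> (J - I - {c}))"
      using us(1) span_add by simp
    moreover have "I \<union> (J - I - {c}) = J - {c}"
      using J(1) c by blast
    ultimately have "c \<in> span (J - {c})"
      by simp
    then have "dependent J"
      unfolding dependent_def using c by blast
    with J(3) show False
      by blast
  qed
  have "A \<union> (J - I) \<subseteq> span W"
    using assms(3,4) J(2) by blast
  then have "dim (A \<union> (J - I)) = dim A + card (J - I)"
    by (rule dim_Un_eq_add_card[OF _ assms(5) finite_Diff[OF \<open>finite J\<close>] indep_mod_A])
  moreover have span_eq_Un: "span (A \<union> (J - I)) = span (A \<union> B)"
  proof (rule span_eq[THEN iffD2, OF conjI])
    have "J \<subseteq> A \<union> (J - I)"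
      using I(1) by blast
    then have "B \<subseteq> span (A \<union> (J - I))"
      using J(4) span_mono by blast
    then show "A \<union> B \<subseteq> span (A \<union> (J - I))"
      using span_superset[of "A \<union> (J - I)"] by blast
    show "A \<union> (J - I) \<subseteq> span (A \<union> B)"
      using J(2) span_superset[of "A \<union> B"] by blast
  qed
  moreover have "dim B = card I + card (J - I)"
    using basis_card_eq_dim[OF J(2,4,3)] card_Diff_subset[OF finite_subset[OF J(1) \<open>finite J\<close>] J(1)]
      card_mono[OF \<open>finite J\<close> J(1)] by simp
  ultimately show ?thesis
    using I(4) span_eq_dim[OF span_eq_Un] by simp
qed

end

definition (in vector_space) intermediate :: "'b set \<Rightarrow> 'b set \<Rightarrow> 'b set \<Rightarrow> bool" where
  "intermediate L X U \<longleftrightarrow> subspace X \<and> L \<subseteq> X \<and> X \<subseteq> U"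

lemma (in vector_space) intermediate_trans:
  "intermediate L X M \<Longrightarrow> intermediate L M U \<Longrightarrow> intermediate L X U"
  unfolding intermediate_def by blast

section \<open>Bars in a box of subspaces\<close>

text \<open>\<open>Za \<subseteq> Zd\<close> stand for the cycles at grades \<open>a \<le> d\<close> and \<open>Be \<subseteq> Bh\<close> for the boundaries at
  grades \<open>e \<le> h\<close>; for cycles \<open>X\<close> and boundaries \<open>Y\<close> in between, \<open>bar_mult X Y\<close> is the value
  \<open>a x e y\<close> of the paper.\<close>

locale subspace_box = vector_space +
  fixes Za Zd Be Bh W :: "'b set"
  assumes subspace_Za: "subspace Za" and subspace_Zd: "subspace Zd" and Za_subset_Zd: "Za \<subseteq> Zd"
    and subspace_Be: "subspace Be" and subspace_Bh: "subspace Bh" and Be_subset_Bh: "Be \<subseteq> Bh"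
    and finite_W: "finite W" and Zd_subset_span: "Zd \<subseteq> span W"
begin

lemma intermediate_Zd: "intermediate Za Zd Zd" and intermediate_Bh: "intermediate Be Bh Bh"
  unfolding intermediate_def
  using subspace_Zd Za_subset_Zd subspace_Bh Be_subset_Bh by simp_all

definition lower_part :: "'b set \<Rightarrow> 'b set \<Rightarrow> 'b set" where
  "lower_part X Y = span ((X \<inter> Be) \<union> (Za \<inter> Y))"

lemma subspace_lower_part: "subspace (lower_part X Y)"
  unfolding lower_part_def by (rule subspace_span)

definition bar_mult :: "'b set \<Rightarrow> 'b set \<Rightarrow> int" where
  "bar_mult X Y = int (dim (X \<inter> Y)) - int (dim (X \<inter> Be)) - int (dim (Za \<inter> Y)) + int (dim (Za \<inter> Be))"

lemma lower_part_iff: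
  assumes "subspace X" "subspace Y"
  shows "v \<in> lower_part X Y \<longleftrightarrow> (\<exists>p r. v = p + r \<and> p \<in> X \<inter> Be \<and> r \<in> Za \<inter> Y)"
proof -
  have "subspace (X \<inter> Be)" "subspace (Za \<inter> Y)"
    using assms subspace_Za subspace_Be by (simp_all add: subspace_inter)
  then have "span (X \<inter> Be) = X \<inter> Be" "span (Za \<inter> Y) = Za \<inter> Y"
    by simp_all
  then show ?thesis
    unfolding lower_part_def span_Un by (simp only: mem_Collect_eq)
qed

lemma lower_part_subset:
  assumes "intermediate Za X U" "intermediate Be Y V"
  shows "lower_part X Y \<subseteq> X \<inter> Y"
proof -
  have "subspace X" "subspace Y" "Za \<subseteq> X" "Be \<subseteq> Y"
    using assms unfolding intermediate_def by auto
  then have "(X \<inter> Be) \<union> (Za \<inter> Y) \<subseteq> X \<inter> Y" "subspace (X \<inter> Y)"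
    by (auto intro: subspace_inter)
  then show ?thesis
    unfolding lower_part_def by (rule span_minimal)
qed

lemma Int_lower_part:
  assumes "intermediate Za X X'" "intermediate Za X' Zd" "intermediate Be Y Y'" "intermediate Be Y' Bh"
  shows "X \<inter> Y \<inter> lower_part X' Y' = lower_part X Y"
proof
  have sub: "subspace X" "subspace Y" "subspace X'" "subspace Y'"
    and inc: "Za \<subseteq> X" "Be \<subseteq> Y" "X \<subseteq> X'" "Y \<subseteq> Y'"
    using assms unfolding intermediate_def by auto
  show "X \<inter> Y \<inter> lower_part X' Y' \<subseteq> lower_part X Y"
  proof
    fix v assume v: "v \<in> X \<inter> Y \<inter> lower_part X' Y'"
    then have "v \<in> lower_part X' Y'"
      by blast
    then obtain p r where pr: "v = p + r" "p \<in> X' \<inter> Be" "r \<in> Za \<inter> Y'"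
      unfolding lower_part_iff[OF sub(3,4)] by blast
    have "v - r \<in> X"
      by (rule subspace_diff[OF sub(1)]) (use v pr(3) inc(1) in auto)
    then have "p \<in> X \<inter> Be"
      using pr(1,2) by (simp add: algebra_simps)
    have "v - p \<in> Y"
      by (rule subspace_diff[OF sub(2)]) (use v pr(2) inc(2) in auto)
    then have "r \<in> Za \<inter> Y"
      using pr(1,3) by (simp add: algebra_simps)
    with pr(1) \<open>p \<in> X \<inter> Be\<close> show "v \<in> lower_part X Y"
      unfolding lower_part_iff[OF sub(1,2)] by blast
  qed
  have "(X \<inter> Be) \<union> (Za \<inter> Y) \<subseteq> (X' \<inter> Be) \<union> (Za \<inter> Y')"
    using inc by blast
  then have "lower_part X Y \<subseteq> lower_part X' Y'"
    unfolding lower_part_def by (rule span_mono)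
  then show "lower_part X Y \<subseteq> X \<inter> Y \<inter> lower_part X' Y'"
    using lower_part_subset[OF assms(1,3)] by blast
qed

lemma bar_mult_eq_dim_diff:
  assumes "intermediate Za X Zd" "intermediate Be Y Bh"
  shows "bar_mult X Y = int (dim (X \<inter> Y)) - int (dim (lower_part X Y))"
proof -
  have sub: "subspace X" "subspace Y" and inc: "Za \<subseteq> X" "Be \<subseteq> Y" "X \<subseteq> span W"
    using assms Zd_subset_span unfolding intermediate_def by auto
  have "subspace (X \<inter> Be)" "subspace (Za \<inter> Y)"
    using sub subspace_Za subspace_Be by (simp_all add: subspace_inter)
  moreover have "X \<inter> Be \<subseteq> span W" "Za \<inter> Y \<subseteq> span W"
    using inc by auto
  ultimately have "dim ((X \<inter> Be) \<union> (Za \<inter> Y)) + dim ((X \<inter> Be) \<inter> (Za \<inter> Y))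
      = dim (X \<inter> Be) + dim (Za \<inter> Y)"
    by (intro dim_Un_Int_finite_span[OF _ _ _ _ finite_W])
  moreover have "(X \<inter> Be) \<inter> (Za \<inter> Y) = Za \<inter> Be"
    using inc by blast
  ultimately show ?thesis
    unfolding bar_mult_def lower_part_def dim_span by simp
qed

lemma bar_mult_nonneg:
  assumes "intermediate Za X Zd" "intermediate Be Y Bh"
  shows "0 \<le> bar_mult X Y"
proof -
  have "X \<inter> Y \<subseteq> span W"
    using assms(1) Zd_subset_span unfolding intermediate_def by blast
  then have "dim (lower_part X Y) \<le> dim (X \<inter> Y)"
    by (rule dim_subset_finite_span[OF lower_part_subset[OF assms] _ finite_W])
  then show ?thesis
    unfolding bar_mult_eq_dim_diff[OF assms] by simp
qed

lemma bar_mult_pos_iff: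
  assumes "intermediate Za X Zd" "intermediate Be Y Bh"
  shows "0 < bar_mult X Y \<longleftrightarrow> \<not> X \<inter> Y \<subseteq> lower_part Zd Bh"
proof -
  have lower_eq: "X \<inter> Y \<inter> lower_part Zd Bh = lower_part X Y"
    by (rule Int_lower_part[OF assms(1) intermediate_Zd assms(2) intermediate_Bh])
  have XYW: "X \<inter> Y \<subseteq> span W"
    using assms(1) Zd_subset_span unfolding intermediate_def by blast
  have NW: "lower_part X Y \<subseteq> span W"
    using lower_part_subset[OF assms] XYW by (rule order_trans)
  show ?thesis
  proof
    assume pos: "0 < bar_mult X Y"
    show "\<not> X \<inter> Y \<subseteq> lower_part Zd Bh"
    proof
      assume "X \<inter> Y \<subseteq> lower_part Zd Bh"
      then have "lower_part X Y = X \<inter> Y"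
        using lower_eq by blast
      with pos show False
        unfolding bar_mult_eq_dim_diff[OF assms] by simp
    qed
  next
    assume "\<not> X \<inter> Y \<subseteq> lower_part Zd Bh"
    then obtain z where z: "z \<in> X \<inter> Y" "z \<notin> lower_part X Y"
      using lower_eq by blast
    then have "z \<notin> span (lower_part X Y)"
      unfolding lower_part_def span_span by blast
    then have "dim (insert z (lower_part X Y)) = Suc (dim (lower_part X Y))"
      by (rule dim_insert_finite_span[OF NW finite_W])
    moreover have "insert z (lower_part X Y) \<subseteq> X \<inter> Y"
      using z(1) lower_part_subset[OF assms] by blast
    then have "dim (insert z (lower_part X Y)) \<le> dim (X \<inter> Y)"
      by (rule dim_subset_finite_span[OF _ XYW finite_W])
    ultimately show "0 < bar_mult X Y"
      unfolding bar_mult_eq_dim_diff[OF assms] by simp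
  qed
qed

lemma bar_mult_mono:
  assumes X: "intermediate Za X X'" "intermediate Za X' Zd"
    and Y: "intermediate Be Y Y'" "intermediate Be Y' Bh"
  shows "bar_mult X Y \<le> bar_mult X' Y'"
proof -
  have XZd: "intermediate Za X Zd" and YBh: "intermediate Be Y Bh"
    using intermediate_trans[OF X(1,2)] intermediate_trans[OF Y(1,2)] by simp_all
  let ?A = "X \<inter> Y" and ?N = "lower_part X Y" and ?N' = "lower_part X' Y'"
  have sub: "subspace ?A" "?A \<subseteq> X' \<inter> Y'"
    using X(1) Y(1) unfolding intermediate_def by (auto intro: subspace_inter)
  have X'Y'W: "X' \<inter> Y' \<subseteq> span W"
    using X(2) Zd_subset_span unfolding intermediate_def by blast
  have N'_sub: "?N' \<subseteq> X' \<inter> Y'"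
    by (rule lower_part_subset[OF X(2) Y(2)])
  have "dim (?A \<union> ?N') + dim (?A \<inter> ?N') = dim ?A + dim ?N'"
    using sub X'Y'W N'_sub
    by (intro dim_Un_Int_finite_span[OF sub(1) subspace_lower_part _ _ finite_W]) blast+
  then have "dim (?A \<union> ?N') + dim ?N = dim ?A + dim ?N'"
    unfolding Int_lower_part[OF assms] .
  moreover have "dim (?A \<union> ?N') \<le> dim (X' \<inter> Y')"
    using sub(2) N'_sub by (intro dim_subset_finite_span[OF _ X'Y'W finite_W]) blast
  ultimately show ?thesis
    unfolding bar_mult_eq_dim_diff[OF XZd YBh] bar_mult_eq_dim_diff[OF X(2) Y(2)] by linarith
qed

lemma scale_diff_in_lower_part:
  assumes "bar_mult Zd Bh = 1" and "z \<in> Zd \<inter> Bh" "z \<notin> lower_part Zd Bh" and "z' \<in> Zd \<inter> Bh"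
  shows "\<exists>k. z' - k *s z \<in> lower_part Zd Bh"
proof -
  have "dim (Zd \<inter> Bh) = Suc (dim (lower_part Zd Bh))"
    using assms(1) unfolding bar_mult_eq_dim_diff[OF intermediate_Zd intermediate_Bh] by simp
  moreover have "Zd \<inter> Bh \<subseteq> span W"
    using Zd_subset_span by blast
  moreover have "z \<notin> span (lower_part Zd Bh)"
    using assms(3) unfolding lower_part_def span_span .
  ultimately have "Zd \<inter> Bh \<subseteq> span (insert z (lower_part Zd Bh))"
    using subset_span_insert_if_dim_eq_Suc[OF lower_part_subset[OF intermediate_Zd intermediate_Bh]]
      finite_W assms(2) by blast
  then show ?thesis
    using assms(4) span_breakdown_eq[of z' z "lower_part Zd Bh"] unfolding lower_part_def span_span by blast
qed

text \<open>Witnesses \<open>z\<^sub>1 \<in> X \<inter> Bh\<close> and \<open>z\<^sub>2 \<in> Zd \<inter> Y\<close> are proportional modulo \<open>lower_part Zd Bh\<close>; writing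
  \<open>z\<^sub>2 - k z\<^sub>1 = p + r\<close> with \<open>p \<in> Be\<close> and \<open>r \<in> Za\<close>, the vector \<open>k z\<^sub>1 + r = z\<^sub>2 - p\<close> witnesses \<open>X \<inter> Y\<close>.\<close>

lemma bar_mult_pos_Int:
  assumes one: "bar_mult Zd Bh = 1"
    and X: "intermediate Za X Zd" and Y: "intermediate Be Y Bh"
    and pos: "0 < bar_mult X Bh" "0 < bar_mult Zd Y"
  shows "0 < bar_mult X Y"
proof -
  let ?N = "lower_part Zd Bh"
  have sub: "subspace X" "subspace Y" and inc: "Za \<subseteq> X" "X \<subseteq> Zd" "Be \<subseteq> Y" "Y \<subseteq> Bh"
    using X Y unfolding intermediate_def by auto
  obtain z1 where z1: "z1 \<in> X \<inter> Bh" "z1 \<notin> ?N"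
    using pos(1) bar_mult_pos_iff[OF X intermediate_Bh] by blast
  obtain z2 where z2: "z2 \<in> Zd \<inter> Y" "z2 \<notin> ?N"
    using pos(2) bar_mult_pos_iff[OF intermediate_Zd Y] by blast
  obtain k where k: "z2 - k *s z1 \<in> ?N"
    using scale_diff_in_lower_part[OF one _ z1(2)] z1(1) z2(1) inc(2,4) by blast
  then obtain p r where pr: "z2 - k *s z1 = p + r" "p \<in> Zd \<inter> Be" "r \<in> Za \<inter> Bh"
    unfolding lower_part_iff[OF subspace_Zd subspace_Bh] by blast
  define v where "v = k *s z1 + r"
  have "v \<in> X"
    unfolding v_def using z1(1) pr(3) inc(1) sub(1) by (simp add: subspace_add subspace_scale subsetD)
  moreover have "v = z2 - p"
    unfolding v_def using pr(1) by (simp add: algebra_simps)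
  then have "v \<in> Y"
    using z2(1) pr(2) inc(3) sub(2) by (simp add: subspace_diff subsetD)
  moreover have "v \<notin> ?N"
  proof
    assume "v \<in> ?N"
    moreover have "r \<in> ?N"
      unfolding lower_part_def using pr(3) by (intro span_base) blast
    ultimately have "k *s z1 \<in> ?N"
      unfolding v_def using subspace_diff[OF subspace_lower_part] by fastforce
    then have "inverse k *s (k *s z1) \<in> ?N"
      by (rule subspace_scale[OF subspace_lower_part])
    moreover have "k \<noteq> 0"
      using k z2(2) by auto
    ultimately have "z1 \<in> ?N"
      by simp
    with z1(2) show False ..
  qed
  ultimately show ?thesis
    using bar_mult_pos_iff[OF X Y] by blast
qed

lemma bar_mult_product:
  assumes one: "bar_mult Zd Bh = 1"
    and X: "intermediate Za X Zd" and Y: "intermediate Be Y Bh"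
  shows "bar_mult X Y = bar_mult X Bh * bar_mult Zd Y"
proof -
  have Xs: "intermediate Za X X" and Ys: "intermediate Be Y Y"
    using X Y unfolding intermediate_def by auto
  have "bar_mult X Y \<le> bar_mult X Bh" "bar_mult X Y \<le> bar_mult Zd Y"
    using bar_mult_mono[OF Xs X Y intermediate_Bh] bar_mult_mono[OF X intermediate_Zd Ys Y] by simp_all
  moreover have "bar_mult X Bh \<le> 1" "bar_mult Zd Y \<le> 1"
    using bar_mult_mono[OF X intermediate_Zd intermediate_Bh intermediate_Bh]
      bar_mult_mono[OF intermediate_Zd intermediate_Zd Y intermediate_Bh] one by simp_all
  moreover have "0 \<le> bar_mult X Y" "0 \<le> bar_mult X Bh" "0 \<le> bar_mult Zd Y"
    using bar_mult_nonneg X Y intermediate_Zd intermediate_Bh by blast+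
  moreover have "0 < bar_mult X Bh \<Longrightarrow> 0 < bar_mult Zd Y \<Longrightarrow> 0 < bar_mult X Y"
    by (rule bar_mult_pos_Int[OF one X Y])
  ultimately show ?thesis
    by (smt (verit) mult_cancel_left1 mult_cancel_right1)
qed

end

section \<open>Moebius inversion over intervals\<close>

definition is_moebius_inverse ::
    "nat \<Rightarrow> (nat \<times> nat \<Rightarrow> nat \<times> nat \<Rightarrow> int) \<Rightarrow> (nat \<times> nat \<Rightarrow> nat \<times> nat \<Rightarrow> int) \<Rightarrow> bool" where
  "is_moebius_inverse n Z m \<longleftrightarrow> (\<forall>x y. (x, y) \<notin> intervals n \<longrightarrow> m x y = 0) \<and>
      (\<forall>(z, w)\<in>intervals n. Z z w = (\<Sum>(x, y)\<in>{(x, y)\<in>intervals n. pleq x z \<and> pleq y w}. m x y))"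

lemma is_moebius_inverseD:
  assumes "is_moebius_inverse n Z m" "(z, w) \<in> intervals n"
  shows "Z z w = (\<Sum>(x, y)\<in>{(x, y)\<in>intervals n. pleq x z \<and> pleq y w}. m x y)"
proof -
  have "\<forall>(z, w)\<in>intervals n. Z z w = (\<Sum>(x, y)\<in>{(x, y)\<in>intervals n. pleq x z \<and> pleq y w}. m x y)"
    using assms(1) unfolding is_moebius_inverse_def by blast
  from bspec[OF this assms(2)] show ?thesis
    by simp
qed

definition strictly_below :: "nat \<Rightarrow> nat \<times> nat \<Rightarrow> nat \<times> nat \<Rightarrow> ((nat \<times> nat) \<times> (nat \<times> nat)) set" where
  "strictly_below n z w = {(x, y)\<in>intervals n. pleq x z \<and> pleq y w \<and> (x, y) \<noteq> (z, w)}"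

lemma finite_intervals: "finite (intervals n)"
proof (rule finite_subset)
  show "intervals n \<subseteq> ({..n} \<times> {..n}) \<times> ({..n} \<times> {..n})"
    unfolding intervals_def grid_def by auto
qed simp

lemma finite_strictly_below: "finite (strictly_below n z w)"
  unfolding strictly_below_def by (rule finite_subset[OF _ finite_intervals]) auto

lemma sum_down_set_eq:
  assumes "(z, w) \<in> intervals n"
  shows "(\<Sum>(x, y)\<in>{(x, y)\<in>intervals n. pleq x z \<and> pleq y w}. m x y)
    = m z w + (\<Sum>p\<in>strictly_below n z w. m (fst p) (snd p))"
proof -
  have "{(x, y)\<in>intervals n. pleq x z \<and> pleq y w} = insert (z, w) (strictly_below n z w)"
    using assms unfolding strictly_below_def pleq_def by auto
  moreover have "(z, w) \<notin> strictly_below n z w"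
    unfolding strictly_below_def by simp
  ultimately show ?thesis
    using finite_strictly_below by (simp add: case_prod_beta)
qed

function moebius_inverse :: "nat \<Rightarrow> (nat \<times> nat \<Rightarrow> nat \<times> nat \<Rightarrow> int) \<Rightarrow> nat \<times> nat \<Rightarrow> nat \<times> nat \<Rightarrow> int" where
  "moebius_inverse n Z z w = (if (z, w) \<in> intervals n
     then Z z w - (\<Sum>p\<in>strictly_below n z w. moebius_inverse n Z (fst p) (snd p)) else 0)"
  by auto
termination
proof (relation "measure (\<lambda>(n, Z, z, w). fst z + snd z + fst w + snd w)")
  fix n Z z w p
  assume p: "p \<in> strictly_below n z w"
  obtain x1 x2 y1 y2 where "p = ((x1, x2), (y1, y2))"
    by (metis prod.collapse)
  moreover obtain z1 z2 w1 w2 where "z = (z1, z2)" "w = (w1, w2)"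
    by (metis prod.collapse)
  ultimately show "((n, Z, fst p, snd p), (n, Z, z, w)) \<in> measure (\<lambda>(n, Z, z, w). fst z + snd z + fst w + snd w)"
    using p unfolding strictly_below_def pleq_def by auto
qed simp

declare moebius_inverse.simps [simp del]

lemma is_moebius_inverse_moebius_inverse: "is_moebius_inverse n Z (moebius_inverse n Z)"
  unfolding is_moebius_inverse_def
proof (intro conjI allI impI ballI)
  fix x y assume "(x, y) \<notin> intervals n"
  then show "moebius_inverse n Z x y = 0"
    by (simp add: moebius_inverse.simps)
next
  fix p assume "p \<in> intervals n"
  moreover obtain z w where p: "p = (z, w)"
    by (cases p)
  ultimately have "Z z w = (\<Sum>(x, y)\<in>{(x, y)\<in>intervals n. pleq x z \<and> pleq y w}. moebius_inverse n Z x y)"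
    by (simp add: sum_down_set_eq moebius_inverse.simps[of n Z z w])
  then show "case p of (z, w) \<Rightarrow> Z z w
      = (\<Sum>(x, y)\<in>{(x, y)\<in>intervals n. pleq x z \<and> pleq y w}. moebius_inverse n Z x y)"
    using p by simp
qed

lemma is_moebius_inverse_unique:
  assumes "is_moebius_inverse n Z m"
  shows "m = moebius_inverse n Z"
proof (intro ext)
  fix z w
  show "m z w = moebius_inverse n Z z w"
    using assms
  proof (induction n Z z w rule: moebius_inverse.induct)
    case (1 n Z z w)
    show ?case
    proof (cases "(z, w) \<in> intervals n")
      case True
      have "Z z w = m z w + (\<Sum>p\<in>strictly_below n z w. m (fst p) (snd p))"
        using is_moebius_inverseD[OF "1.prems" True] unfolding sum_down_set_eq[OF True] .
      moreover have "(\<Sum>p\<in>strictly_below n z w. m (fst p) (snd p))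
          = (\<Sum>p\<in>strictly_below n z w. moebius_inverse n Z (fst p) (snd p))"
        using "1.IH"[OF True _ "1.prems"] by (rule sum.cong[OF refl])
      ultimately show ?thesis
        using True by (simp add: moebius_inverse.simps[of n Z z w])
    next
      case False
      then have "m z w = 0"
        using "1.prems" unfolding is_moebius_inverse_def by blast
      with False show ?thesis
        by (simp add: moebius_inverse.simps)
    qed
  qed
qed

lemma Dgm_is_moebius_inverse: "is_moebius_inverse n (ZB K n F TYPE('k::field) q) (Dgm K n F TYPE('k) q)"
proof -
  have "\<exists>!m. is_moebius_inverse n (ZB K n F TYPE('k) q) m"
    using is_moebius_inverse_moebius_inverse is_moebius_inverse_unique by blast
  then show ?thesis
    unfolding Dgm_def is_moebius_inverse_def[symmetric] by (rule theI')
qed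

definition box_diff :: "(nat \<times> nat \<Rightarrow> int) \<Rightarrow> nat \<times> nat \<Rightarrow> int" where
  "box_diff \<phi> x = \<phi> x - \<phi> (fst x - 1, snd x) - \<phi> (fst x, snd x - 1) + \<phi> (fst x - 1, snd x - 1)"

lemma box_diff_cong:
  assumes "\<And>y. y \<in> {x, (fst x - 1, snd x), (fst x, snd x - 1), (fst x - 1, snd x - 1)} \<Longrightarrow> \<phi> y = \<psi> y"
  shows "box_diff \<phi> x = box_diff \<psi> x"
  unfolding box_diff_def using assms by simp

lemma box_diff_sum: "box_diff (\<lambda>x. \<Sum>p\<in>A. \<phi> p x) d = (\<Sum>p\<in>A. box_diff (\<phi> p) d)"
  unfolding box_diff_def by (simp add: sum.distrib sum_subtractf)

lemma box_diff_mult_left: "box_diff (\<lambda>x. c * \<phi> x) d = c * box_diff \<phi> d"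
  unfolding box_diff_def by (simp add: algebra_simps)

lemma box_diff_mult_right: "box_diff (\<lambda>x. \<phi> x * c) d = box_diff \<phi> d * c"
  unfolding box_diff_def by (simp add: algebra_simps)

lemma box_diff_pleq:
  assumes "pleq (1, 1) d"
  shows "box_diff (\<lambda>z. of_bool (pleq x z)) d = of_bool (x = d)"
  using assms unfolding box_diff_def pleq_def by (cases x, cases d) auto

lemma is_moebius_inverse_sum_indicators:
  assumes "is_moebius_inverse n Z m" "(x, y) \<in> intervals n"
  shows "Z x y = (\<Sum>p\<in>intervals n. m (fst p) (snd p) * of_bool (pleq (fst p) x) * of_bool (pleq (snd p) y))"
proof -
  have "Z x y = (\<Sum>(x', y')\<in>{(x', y')\<in>intervals n. pleq x' x \<and> pleq y' y}. m x' y')"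
    by (rule is_moebius_inverseD[OF assms])
  also have "\<dots> = (\<Sum>p\<in>{p\<in>intervals n. pleq (fst p) x \<and> pleq (snd p) y}. m (fst p) (snd p))"
    by (rule sum.cong) auto
  also have "\<dots> = (\<Sum>p\<in>intervals n. if pleq (fst p) x \<and> pleq (snd p) y then m (fst p) (snd p) else 0)"
    by (rule sum.inter_filter[OF finite_intervals])
  also have "\<dots> = (\<Sum>p\<in>intervals n. m (fst p) (snd p) * of_bool (pleq (fst p) x) * of_bool (pleq (snd p) y))"
    by (rule sum.cong) auto
  finally show ?thesis .
qed

text \<open>Since \<open>d \<le> h - (1, 1)\<close>, all sixteen grades of the double box difference are intervals, where \<open>Z\<close>
  is a sum over down-sets; \<open>box_diff\<close> turns the indicators of down-sets into those of points.\<close>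

lemma moebius_inverse_box_diff:
  assumes m: "is_moebius_inverse n Z m" and "h \<in> grid n"
    and d: "pleq (1, 1) d" and dh: "pleq d (fst h - 1, snd h - 1)"
  shows "m d h = box_diff (\<lambda>x. box_diff (Z x) h) d"
proof -
  define \<chi> :: "nat \<times> nat \<Rightarrow> nat \<times> nat \<Rightarrow> int" where "\<chi> x z = of_bool (pleq x z)" for x z
  let ?Z = "\<lambda>z w. \<Sum>p\<in>intervals n. m (fst p) (snd p) * \<chi> (fst p) z * \<chi> (snd p) w"
  have h: "pleq (1, 1) h"
    using d dh unfolding pleq_def by auto
  have "Z x y = ?Z x y"
    if "x \<in> {d, (fst d - 1, snd d), (fst d, snd d - 1), (fst d - 1, snd d - 1)}"
      and "y \<in> {h, (fst h - 1, snd h), (fst h, snd h - 1), (fst h - 1, snd h - 1)}" for x y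
  proof -
    have "(x, y) \<in> intervals n"
      using that assms(2) d dh unfolding intervals_def grid_def pleq_def by auto
    then show ?thesis
      unfolding \<chi>_def by (rule is_moebius_inverse_sum_indicators[OF m])
  qed
  then have "box_diff (\<lambda>x. box_diff (Z x) h) d = box_diff (\<lambda>x. box_diff (?Z x) h) d"
    by (intro box_diff_cong) blast
  also have "\<dots> = (\<Sum>p\<in>intervals n. m (fst p) (snd p) * box_diff (\<chi> (fst p)) d * box_diff (\<chi> (snd p)) h)"
    by (simp add: box_diff_sum box_diff_mult_left box_diff_mult_right)
  also have "\<dots> = (\<Sum>p\<in>intervals n. if p = (d, h) then m (fst p) (snd p) else 0)"
    unfolding \<chi>_def box_diff_pleq[OF d] box_diff_pleq[OF h] by (intro sum.cong) (auto simp: prod_eq_iff)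
  also have "\<dots> = m d h"
  proof -
    have "(d, h) \<in> intervals n"
      using assms(2) d dh unfolding intervals_def grid_def pleq_def by auto
    then show ?thesis
      by (subst sum.delta[OF finite_intervals]) simp
  qed
  finally show ?thesis ..
qed

text \<open>\<open>M\<close> differs from \<open>Z\<close> by terms depending on one grade only, which \<open>box_diff\<close> kills, and it
  vanishes at \<open>x = a\<close> and at \<open>y = e\<close>.\<close>

lemma box_diff_box_diff_factor:
  fixes Z :: "nat \<times> nat \<Rightarrow> nat \<times> nat \<Rightarrow> int" and d h :: "nat \<times> nat"
  defines "a \<equiv> (fst d - 1, snd d - 1)" and "b \<equiv> (fst d - 1, snd d)" and "c \<equiv> (fst d, snd d - 1)"
    and "e \<equiv> (fst h - 1, snd h - 1)" and "f \<equiv> (fst h - 1, snd h)" and "g \<equiv> (fst h, snd h - 1)"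
  defines "M \<equiv> \<lambda>x y. Z x y - Z x e - Z a y + Z a e"
  assumes one: "M d h = 1" and product: "\<And>x y. x \<in> {b, c} \<Longrightarrow> y \<in> {f, g} \<Longrightarrow> M x y = M x h * M d y"
  shows "box_diff (\<lambda>x. box_diff (Z x) h) d = (1 - M b h - M c h) * (1 - M d f - M d g)"
proof -
  have "box_diff (\<lambda>x. box_diff (Z x) h) d
      = M d h - M b h - M c h - M d f - M d g + M b f + M b g + M c f + M c g"
    unfolding box_diff_def M_def a_def b_def c_def e_def f_def g_def by simp
  then show ?thesis
    using one product[of b f] product[of b g] product[of c f] product[of c g] by (simp add: algebra_simps)
qed

section \<open>Chain spaces\<close>

interpretation chain: vector_space "chain_scale :: 'k::field \<Rightarrow> ('v set \<Rightarrow> 'k) \<Rightarrow> 'v set \<Rightarrow> 'k"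
  by unfold_locales (simp_all add: chain_scale_def fun_eq_iff algebra_simps)

lemma module_hom_bdry: "module_hom chain_scale chain_scale (bdry K :: ('v::linorder set \<Rightarrow> 'k::field) \<Rightarrow> _)"
  unfolding module_hom_iff
  by (auto simp: module_iff_vector_space chain.vector_space_axioms bdry_def chain_scale_def fun_eq_iff
      algebra_simps sum.distrib sum_distrib_left)

lemma subspace_chains: "chain.subspace (chains q L :: ('v set \<Rightarrow> 'k::field) set)"
  unfolding chain.subspace_def chains_def chain_scale_def by (auto simp: fun_eq_iff) (metis add.left_neutral)+

lemma subspace_cycles: "chain.subspace (cycles K q L :: ('v::linorder set \<Rightarrow> 'k::field) set)"
proof -
  have "cycles K q L = chains q L \<inter> {c. bdry K c = (0 :: 'v set \<Rightarrow> 'k)}"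
    unfolding cycles_def by blast
  then show ?thesis
    using chain.subspace_inter[OF subspace_chains module_hom.subspace_kernel[OF module_hom_bdry]]
    by simp
qed

lemma subspace_boundaries: "chain.subspace (boundaries K q L :: ('v::linorder set \<Rightarrow> 'k::field) set)"
  unfolding boundaries_def by (rule module_hom.subspace_image[OF module_hom_bdry subspace_chains])

lemma chains_mono: "L \<subseteq> L' \<Longrightarrow> chains q L \<subseteq> chains q L'"
  unfolding chains_def by auto

lemma cycles_mono: "L \<subseteq> L' \<Longrightarrow> cycles K q L \<subseteq> cycles K q L'"
  unfolding cycles_def using chains_mono by blast

lemma boundaries_mono: "L \<subseteq> L' \<Longrightarrow> boundaries K q L \<subseteq> boundaries K q L'"
  unfolding boundaries_def using chains_mono by blast

definition elementary_chains :: "'v set set \<Rightarrow> ('v set \<Rightarrow> 'k::field) set" where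
  "elementary_chains K = (\<lambda>\<sigma> \<tau>. of_bool (\<tau> = \<sigma>)) ` K"

lemma chains_subset_span:
  assumes "finite K"
  shows "chains q K \<subseteq> chain.span (elementary_chains K :: ('v set \<Rightarrow> 'k::field) set)"
proof
  fix c :: "'v set \<Rightarrow> 'k" assume c: "c \<in> chains q K"
  have "c = (\<Sum>\<sigma>\<in>K. chain_scale (c \<sigma>) (\<lambda>\<tau>. of_bool (\<tau> = \<sigma>)))"
  proof
    fix \<tau>
    have "(\<Sum>\<sigma>\<in>K. chain_scale (c \<sigma>) (\<lambda>\<tau>. of_bool (\<tau> = \<sigma>))) \<tau> = (\<Sum>\<sigma>\<in>K. if \<sigma> = \<tau> then c \<sigma> else 0)"
      unfolding chain_scale_def by (induction K rule: infinite_finite_induct) auto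
    also have "\<dots> = c \<tau>"
      using c assms unfolding chains_def by (auto simp: sum.delta')
    finally show "c \<tau> = (\<Sum>\<sigma>\<in>K. chain_scale (c \<sigma>) (\<lambda>\<tau>. of_bool (\<tau> = \<sigma>))) \<tau>" ..
  qed
  also have "\<dots> \<in> chain.span (elementary_chains K)"
    unfolding elementary_chains_def
    by (intro chain.span_sum chain.span_scale chain.span_base) simp
  finally show "c \<in> chain.span (elementary_chains K)" .
qed

lemma two_filtration_mono:
  "two_filtration K n F \<Longrightarrow> x \<in> grid n \<Longrightarrow> y \<in> grid n \<Longrightarrow> pleq x y \<Longrightarrow> F x \<subseteq> F y"
  unfolding two_filtration_def by blast

lemma intermediate_cycles:
  assumes "two_filtration K n F" "x \<in> grid n" "y \<in> grid n" "z \<in> grid n" "pleq x y" "pleq y z"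
  shows "chain.intermediate (cycles K q (F x)) (cycles K q (F y)) (cycles K q (F z) :: ('v::linorder set \<Rightarrow> 'k::field) set)"
  unfolding chain.intermediate_def
  using subspace_cycles cycles_mono[OF two_filtration_mono[OF assms(1,2,3,5)]]
    cycles_mono[OF two_filtration_mono[OF assms(1,3,4,6)]] by blast

text \<open>As in \<open>ZB\<close>, the top grade \<open>(n, n)\<close> imposes no boundary condition.\<close>

definition ZB_boundaries :: "'v set set \<Rightarrow> nat \<Rightarrow> nat \<Rightarrow> (nat \<times> nat \<Rightarrow> 'v::linorder set set) \<Rightarrow> nat \<times> nat
    \<Rightarrow> ('v set \<Rightarrow> 'k::field) set" where
  "ZB_boundaries K n q F y = (if y = (n, n) then UNIV else boundaries K q (F y))"

lemma ZB_eq_dim: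
  "ZB K n F TYPE('k::field) q x y = int (chain.dim (cycles K q (F x) \<inter> (ZB_boundaries K n q F y :: ('v::linorder set \<Rightarrow> 'k) set)))"
  unfolding ZB_def vdim_def ZB_boundaries_def by simp

lemma ZB_boundaries_mono:
  assumes "two_filtration K n F" "x \<in> grid n" "y \<in> grid n" "pleq x y"
  shows "ZB_boundaries K n q F x \<subseteq> ZB_boundaries K n q F y"
proof (cases "y = (n, n)")
  case False
  then have "x \<noteq> (n, n)"
    using assms(3,4) unfolding grid_def pleq_def by (auto simp: prod_eq_iff)
  with False show ?thesis
    unfolding ZB_boundaries_def using boundaries_mono[OF two_filtration_mono[OF assms]] by simp
qed (simp add: ZB_boundaries_def)

lemma subspace_ZB_boundaries: "chain.subspace (ZB_boundaries K n q F y :: ('v::linorder set \<Rightarrow> 'k::field) set)"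
  by (simp add: ZB_boundaries_def subspace_boundaries)

lemma intermediate_ZB_boundaries:
  assumes "two_filtration K n F" "x \<in> grid n" "y \<in> grid n" "z \<in> grid n" "pleq x y" "pleq y z"
  shows "chain.intermediate (ZB_boundaries K n q F x) (ZB_boundaries K n q F y)
    (ZB_boundaries K n q F z :: ('v::linorder set \<Rightarrow> 'k::field) set)"
  unfolding chain.intermediate_def
  using subspace_ZB_boundaries ZB_boundaries_mono[where q = q, OF assms(1,2,3,5)]
    ZB_boundaries_mono[where q = q, OF assms(1,3,4,6)] by blast

lemma subspace_box_filtration:
  assumes "finite K" "two_filtration K n F" "a \<in> grid n" "d \<in> grid n" "e \<in> grid n" "h \<in> grid n"
    and "pleq a d" "pleq e h"
  shows "subspace_box chain_scale (cycles K q (F a)) (cycles K q (F d))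
    (ZB_boundaries K n q F e) (ZB_boundaries K n q F h :: ('v::linorder set \<Rightarrow> 'k::field) set)
    (elementary_chains K)"
proof -
  have "cycles K q (F d) \<subseteq> chains q K"
    using chains_mono[of "F d" K q] assms(2,4) unfolding cycles_def two_filtration_def subcomplex_def by blast
  then have "cycles K q (F d) \<subseteq> chain.span (elementary_chains K :: ('v set \<Rightarrow> 'k) set)"
    using chains_subset_span[OF assms(1)] by (rule order_trans)
  moreover have "pleq d d" "pleq h h"
    unfolding pleq_def by simp_all
  ultimately show ?thesis
    using intermediate_cycles[where q = q, OF assms(2,3,4,4,7)]
      intermediate_ZB_boundaries[where q = q, OF assms(2,5,6,6,8)] assms(1) chain.vector_space_axioms
    unfolding subspace_box_def subspace_box_axioms_def chain.intermediate_def elementary_chains_def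
    by (simp add: subspace_cycles subspace_ZB_boundaries)
qed

theorem mainTheorem2:
  fixes K :: "'v::linorder set set" and n q :: nat
    and F :: "nat \<times> nat \<Rightarrow> 'v set set" and d h :: "nat \<times> nat"
  assumes "finite K" and "simplicial_complex K"
    and "two_filtration K n F" and "non_degenerate n F"
    and "d \<in> grid n" and "h \<in> grid n"
    and "pleq (1, 1) d" and "pleq d (fst h - 1, snd h - 1)"
  defines "a \<equiv> (fst d - 1, snd d - 1)" and "b \<equiv> (fst d - 1, snd d)"
    and "c \<equiv> (fst d, snd d - 1)" and "e \<equiv> (fst h - 1, snd h - 1)"
    and "f \<equiv> (fst h - 1, snd h)" and "g \<equiv> (fst h, snd h - 1)"
    and "zb \<equiv> ZB K n F TYPE('k::field) q"
  assumes "zb d h - zb d e - zb a h + zb a e = 1"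
  shows "Dgm K n F TYPE('k) q d h =
     (1 - (zb b h - zb b e - zb a h + zb a e) - (zb c h - zb c e - zb a h + zb a e))
   * (1 - (zb d f - zb d e - zb a f + zb a e) - (zb d g - zb d e - zb a g + zb a e))"
proof -
  let ?Z = "\<lambda>x. cycles K q (F x) :: ('v set \<Rightarrow> 'k) set" and ?B = "ZB_boundaries K n q F"
  have grid: "{a, b, c, d, e, f, g, h} \<subseteq> grid n"
    using assms(5-8) unfolding a_def b_def c_def e_def f_def g_def grid_def pleq_def by auto
  have le: "pleq a b" "pleq a c" "pleq b d" "pleq c d" "pleq a d"
    "pleq e f" "pleq e g" "pleq f h" "pleq g h" "pleq e h"
    using assms(7,8) unfolding a_def b_def c_def e_def f_def g_def pleq_def by auto
  interpret box: subspace_box chain_scale "?Z a" "?Z d" "?B e" "?B h" "elementary_chains K"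
    by (rule subspace_box_filtration[OF assms(1,3)]) (use grid le in auto)
  have bar_mult_eq: "zb x y - zb x e - zb a y + zb a e = box.bar_mult (?Z x) (?B y)" for x y
    unfolding zb_def ZB_eq_dim box.bar_mult_def ..
  have Dgm_eq: "Dgm K n F TYPE('k) q d h = box_diff (\<lambda>x. box_diff (zb x) h) d"
    unfolding zb_def by (rule moebius_inverse_box_diff[OF Dgm_is_moebius_inverse assms(6-8)])
  show ?thesis
    unfolding Dgm_eq
  proof (rule box_diff_box_diff_factor[of zb d h, folded a_def b_def c_def e_def f_def g_def])
    show one: "zb d h - zb d e - zb a h + zb a e = 1"
      by (rule assms(16))
    fix x y assume "x \<in> {b, c}" "y \<in> {f, g}"
    then have "chain.intermediate (?Z a) (?Z x) (?Z d)" "chain.intermediate (?B e) (?B y) (?B h)"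
      using grid le by (auto intro: intermediate_cycles[OF assms(3)] intermediate_ZB_boundaries[OF assms(3)])
    then show "zb x y - zb x e - zb a y + zb a e
        = (zb x h - zb x e - zb a h + zb a e) * (zb d y - zb d e - zb a y + zb a e)"
      using box.bar_mult_product one unfolding bar_mult_eq by blast
  qed
qed

end
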